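(* Let $\mathcal{J}$ be a simple input set for Machine Covering on $m$ machines. Then for every arrival order of $\mathcal{J}$, the Greedy-strategy produces a schedule with minimum load at least $\frac{\mathrm{OPT}(\mathcal{J})}{100\sqrt[4]{m}}$.
   Context: Machine Covering: $n$ jobs with non-negative sizes are assigned to $m$ identical parallel machines, maximizing the minimum machine load; $\mathrm{OPT}(\mathcal{J})$ is the optimal offline minimum load. The Greedy-strategy processes jobs in arrival order and assigns each to a currently least loaded machine (ties broken arbitrarily). A job is called large if its size exceeds $\frac{\mathrm{OPT}(\mathcal{J})}{100\sqrt[4]{m}}$ and small otherwise; $k$ is the number of large jobs in $\mathcal{J}$. The input set $\mathcal{J}$ is called simple if $n<m$, or $k\ge m$, or $k\le m-\frac{m^{3/4}}{50}$. *)

theory Defs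
  imports Complex_Main "HOL-Library.FuncSet"
begin

text \<open>Jobs are given as a list of sizes in arrival order; job i has size xs!i.
  A schedule on m machines (numbered 0..<m) is a map a from job indices {..<length xs}
  to machines.\<close>

definition schedules :: "nat \<Rightarrow> real list \<Rightarrow> (nat \<Rightarrow> nat) set" where
  "schedules m xs = {..<length xs} \<rightarrow>\<^sub>E {..<m}"

definition load :: "real list \<Rightarrow> (nat \<Rightarrow> nat) \<Rightarrow> nat \<Rightarrow> real" where
  "load xs a j = (\<Sum>i\<in>{i. i < length xs \<and> a i = j}. xs ! i)"

definition min_load :: "nat \<Rightarrow> real list \<Rightarrow> (nat \<Rightarrow> nat) \<Rightarrow> real" where
  "min_load m xs a = Min ((load xs a) ` {..<m})"

definition OPT :: "nat \<Rightarrow> real list \<Rightarrow> real" where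
  "OPT m xs = Max ((min_load m xs) ` schedules m xs)"

definition load_before :: "real list \<Rightarrow> (nat \<Rightarrow> nat) \<Rightarrow> nat \<Rightarrow> nat \<Rightarrow> real" where
  "load_before xs a i j = (\<Sum>k\<in>{k. k < i \<and> a k = j}. xs ! k)"

text \<open>a is a schedule the Greedy strategy may produce (ties broken arbitrarily).\<close>
definition greedy_schedule :: "nat \<Rightarrow> real list \<Rightarrow> (nat \<Rightarrow> nat) \<Rightarrow> bool" where
  "greedy_schedule m xs a \<longleftrightarrow> a \<in> schedules m xs \<and>
     (\<forall>i < length xs. \<forall>j < m. load_before xs a i (a i) \<le> load_before xs a i j)"

definition num_large :: "nat \<Rightarrow> real list \<Rightarrow> nat" where
  "num_large m xs = card {i. i < length xs \<and> xs ! i > OPT m xs / (100 * root 4 (real m))}"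

definition simple_input :: "nat \<Rightarrow> real list \<Rightarrow> bool" where
  "simple_input m xs \<longleftrightarrow> length xs < m \<or> num_large m xs \<ge> m \<or>
     real (num_large m xs) \<le> real m - real m powr (3/4) / 50"

end

theory Submission
  imports Defs
begin

text \<open>Let \<open>L\<close> be the minimum load of the Greedy schedule and \<open>T = OPT/(100 m\<^sup>1\<^sup>/\<^sup>4)\<close>.
  Greedy puts every job on a machine whose load is at most \<open>L\<close> at that moment. If there are
  fewer jobs than machines, then \<open>OPT = 0\<close>. If \<open>L < T\<close>, no machine receives two large jobs and
  the least loaded machine receives none, so there are fewer than \<open>m\<close> large jobs. Finally, the
  small jobs put on a Greedy machine total at most \<open>L + T\<close>, while in an optimal schedule at
  least \<open>m - k\<close> machines hold only small jobs, each with load at least \<open>OPT\<close>; hence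
  \<open>(m - k) OPT \<le> m (L + T)\<close>, which for \<open>m - k \<ge> m\<^sup>3\<^sup>/\<^sup>4/50\<close> gives \<open>L \<ge> T\<close>.\<close>

lemma nth_nonneg: "\<forall>x \<in> set xs. x \<ge> 0 \<Longrightarrow> i < length xs \<Longrightarrow> xs ! i \<ge> (0::real)"
  using nth_mem by blast

lemma load_nonneg: "\<forall>x \<in> set xs. x \<ge> 0 \<Longrightarrow> load xs a j \<ge> 0"
  unfolding load_def by (rule sum_nonneg) (auto intro: nth_nonneg)

lemma load_before_le_load:
  assumes "\<forall>x \<in> set xs. x \<ge> 0" "i \<le> length xs"
  shows "load_before xs a i j \<le> load xs a j"
  unfolding load_before_def load_def
  by (rule sum_mono2) (use assms in \<open>auto intro: nth_nonneg\<close>)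

lemma nth_le_load_before:
  assumes "\<forall>x \<in> set xs. x \<ge> 0" "i < i'" "i' \<le> length xs"
  shows "xs ! i \<le> load_before xs a i' (a i)"
  unfolding load_before_def
  by (rule member_le_sum) (use assms in \<open>auto intro: nth_nonneg\<close>)

lemma nth_le_load:
  assumes "\<forall>x \<in> set xs. x \<ge> 0" "i < length xs"
  shows "xs ! i \<le> load xs a (a i)"
  using nth_le_load_before[OF assms(1) lessI, of i a] load_before_le_load[OF assms(1)] assms(2)
  by (meson Suc_leI order_trans)

lemma min_load_le_load: "j < m \<Longrightarrow> min_load m xs a \<le> load xs a j"
  unfolding min_load_def by (rule Min_le) auto

lemma min_load_attained:
  assumes "m \<ge> 1"
  obtains j where "j < m" "load xs a j = min_load m xs a"
proof -
  have "min_load m xs a \<in> load xs a ` {..<m}"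
    unfolding min_load_def by (rule Min_in) (use assms in \<open>auto simp: lessThan_empty_iff\<close>)
  then show ?thesis using that by auto
qed

lemma min_load_nonneg:
  assumes "m \<ge> 1" "\<forall>x \<in> set xs. x \<ge> 0"
  shows "min_load m xs a \<ge> 0"
  using min_load_attained[OF assms(1)] load_nonneg[OF assms(2)] by metis

lemma finite_schedules: "finite (schedules m xs)"
  unfolding schedules_def by (rule finite_PiE) auto

lemma schedules_nonempty:
  assumes "m \<ge> 1"
  shows "schedules m xs \<noteq> {}"
proof -
  have "(\<lambda>i. if i < length xs then 0 else undefined) \<in> schedules m xs"
    unfolding schedules_def using assms by (auto split: if_splits)
  then show ?thesis by blast
qed

lemma OPT_attained:
  assumes "m \<ge> 1"
  obtains b where "b \<in> schedules m xs" "min_load m xs b = OPT m xs"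
proof -
  have "OPT m xs \<in> min_load m xs ` schedules m xs"
    unfolding OPT_def by (rule Max_in) (use finite_schedules schedules_nonempty[OF assms] in auto)
  then show ?thesis using that by auto
qed

lemma OPT_nonneg:
  assumes "m \<ge> 1" "\<forall>x \<in> set xs. x \<ge> 0"
  shows "OPT m xs \<ge> 0"
  using OPT_attained[OF assms(1)] min_load_nonneg[OF assms] by metis

lemma min_load_nonpos_if_fewer_jobs:
  assumes "c \<in> schedules m xs" "length xs < m"
  shows "min_load m xs c \<le> 0"
proof -
  have "card (c ` {..<length xs}) < card {..<m}"
    using card_image_le[of "{..<length xs}" c] assms(2) by simp
  then have "\<not> {..<m} \<subseteq> c ` {..<length xs}"
    by (meson card_mono finite_imageI finite_lessThan not_le)
  then obtain j where j: "j < m" "j \<notin> c ` {..<length xs}" by auto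
  then have idle: "{i. i < length xs \<and> c i = j} = {}" by auto
  have "load xs c j = 0" unfolding load_def idle by simp
  then show ?thesis using min_load_le_load[OF j(1), of xs c] by simp
qed

lemma OPT_eq_0_if_fewer_jobs:
  assumes "m \<ge> 1" "\<forall>x \<in> set xs. x \<ge> 0" "length xs < m"
  shows "OPT m xs = 0"
proof -
  have "OPT m xs \<le> 0"
    unfolding OPT_def using finite_schedules schedules_nonempty[OF assms(1)]
    by (simp add: Max_le_iff min_load_nonpos_if_fewer_jobs[OF _ assms(3)])
  then show ?thesis using OPT_nonneg[OF assms(1,2)] by simp
qed

lemma greedy_load_before_le_min_load:
  assumes "greedy_schedule m xs a" "m \<ge> 1" "\<forall>x \<in> set xs. x \<ge> 0" "i < length xs"
  shows "load_before xs a i (a i) \<le> min_load m xs a"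
proof -
  obtain j where j: "j < m" "load xs a j = min_load m xs a"
    using min_load_attained[OF assms(2)] .
  have "load_before xs a i (a i) \<le> load_before xs a i j"
    using assms(1,4) j(1) unfolding greedy_schedule_def by auto
  also have "\<dots> \<le> load xs a j"
    using load_before_le_load[OF assms(3)] assms(4) by simp
  finally show ?thesis using j(2) by simp
qed

definition large_jobs :: "real list \<Rightarrow> real \<Rightarrow> nat set" where
  "large_jobs xs T = {i. i < length xs \<and> T < xs ! i}"

lemma finite_large_jobs: "finite (large_jobs xs T)"
  unfolding large_jobs_def by auto

lemma greedy_few_large_jobs_if_min_load_small:
  assumes greedy: "greedy_schedule m xs a" and "m \<ge> 1" and nonneg: "\<forall>x \<in> set xs. x \<ge> 0"
    and small: "min_load m xs a < T"
  shows "card (large_jobs xs T) < m"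
proof -
  obtain jmin where jmin: "jmin < m" "load xs a jmin = min_load m xs a"
    using min_load_attained[OF \<open>m \<ge> 1\<close>] .
  have avoids_jmin: "a i \<noteq> jmin" if "i \<in> large_jobs xs T" for i
    using nth_le_load[OF nonneg, of i a] that jmin(2) small unfolding large_jobs_def by auto
  have "inj_on a (large_jobs xs T)"
  proof -
    have "a p \<noteq> a q" if "p \<in> large_jobs xs T" "q \<in> large_jobs xs T" "p < q" for p q
    proof
      assume "a p = a q"
      \<comment> \<open>then job \<open>q\<close> was put on a machine already holding the large job \<open>p\<close>\<close>
      have "xs ! p \<le> load_before xs a q (a q)"
        using nth_le_load_before[OF nonneg \<open>p < q\<close>, of a] \<open>a p = a q\<close> that(2)
        unfolding large_jobs_def by simp
      also have "\<dots> \<le> min_load m xs a"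
        using greedy_load_before_le_min_load[OF greedy \<open>m \<ge> 1\<close> nonneg] that(2)
        unfolding large_jobs_def by simp
      finally show False using that(1) small unfolding large_jobs_def by simp
    qed
    then show ?thesis by (intro inj_onI) (metis linorder_neqE_nat)
  qed
  then have "card (large_jobs xs T) = card (a ` large_jobs xs T)" by (simp add: card_image)
  also have "\<dots> \<le> card ({..<m} - {jmin})"
  proof (intro card_mono)
    have "a \<in> {..<length xs} \<rightarrow> {..<m}"
      using greedy unfolding greedy_schedule_def schedules_def by (simp add: PiE_iff Pi_iff)
    then show "a ` large_jobs xs T \<subseteq> {..<m} - {jmin}"
      using avoids_jmin unfolding large_jobs_def by auto
  qed simp
  also have "\<dots> < m" using jmin(1) by simp
  finally show ?thesis .
qed

definition small_load :: "real list \<Rightarrow> real \<Rightarrow> (nat \<Rightarrow> nat) \<Rightarrow> nat \<Rightarrow> real" where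
  "small_load xs T c j = (\<Sum>i | i < length xs \<and> c i = j \<and> xs ! i \<le> T. xs ! i)"

lemma sum_small_load:
  assumes "c \<in> schedules m xs"
  shows "(\<Sum>j<m. small_load xs T c j) = (\<Sum>i | i < length xs \<and> xs ! i \<le> T. xs ! i)"
proof -
  have "(\<Sum>j<m. \<Sum>i | i \<in> {i. i < length xs \<and> xs ! i \<le> T} \<and> c i = j. xs ! i)
       = (\<Sum>i | i < length xs \<and> xs ! i \<le> T. xs ! i)"
    by (rule sum.group) (use assms in \<open>auto simp: schedules_def\<close>)
  then show ?thesis unfolding small_load_def by (simp add: conj_ac)
qed

lemma greedy_small_load_le:
  assumes greedy: "greedy_schedule m xs a" and "m \<ge> 1" and nonneg: "\<forall>x \<in> set xs. x \<ge> 0"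
    and "T \<ge> 0"
  shows "small_load xs T a j \<le> min_load m xs a + T"
proof -
  define S where "S = {i. i < length xs \<and> a i = j \<and> xs ! i \<le> T}"
  have "finite S" unfolding S_def by auto
  show ?thesis
  proof (cases "S = {}")
    case True
    then show ?thesis
      using min_load_nonneg[OF \<open>m \<ge> 1\<close> nonneg] \<open>T \<ge> 0\<close>
      unfolding small_load_def S_def[symmetric] by simp
  next
    case False
    \<comment> \<open>the last small job on machine \<open>j\<close> arrived when its load was at most the final minimum load\<close>
    define l where "l = Max S"
    have l: "l \<in> S" "\<And>i. i \<in> S \<Longrightarrow> i \<le> l"
      unfolding l_def using False \<open>finite S\<close> by auto
    then have S_eq: "S = insert l {i \<in> S. i < l}" by force
    have "small_load xs T a j = xs ! l + (\<Sum>i \<in> {i \<in> S. i < l}. xs ! i)"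
      unfolding small_load_def S_def[symmetric]
      by (subst S_eq, subst sum.insert) (use \<open>finite S\<close> in auto)
    also have "(\<Sum>i \<in> {i \<in> S. i < l}. xs ! i) \<le> load_before xs a l j"
      unfolding load_before_def
      by (rule sum_mono2) (use l(1) in \<open>auto simp: S_def intro!: nth_nonneg[OF nonneg]\<close>)
    also have "load_before xs a l j \<le> min_load m xs a"
      using greedy_load_before_le_min_load[OF greedy \<open>m \<ge> 1\<close> nonneg, of l] l(1)
      unfolding S_def by auto
    finally show ?thesis using l(1) unfolding S_def by auto
  qed
qed

lemma min_load_times_free_machines_le_small_volume:
  assumes c: "c \<in> schedules m xs" and "m \<ge> 1" and nonneg: "\<forall>x \<in> set xs. x \<ge> 0"
  shows "(real m - real (card (large_jobs xs T))) * min_load m xs c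
           \<le> (\<Sum>i | i < length xs \<and> xs ! i \<le> T. xs ! i)"
proof -
  define F where "F = {..<m} - c ` large_jobs xs T"
  have "finite (F \<union> c ` large_jobs xs T)" unfolding F_def using finite_large_jobs by simp
  moreover have "{..<m} \<subseteq> F \<union> c ` large_jobs xs T" unfolding F_def by auto
  ultimately have "card {..<m} \<le> card (F \<union> c ` large_jobs xs T)" by (rule card_mono)
  then have "m \<le> card (F \<union> c ` large_jobs xs T)" by simp
  also have "\<dots> \<le> card F + card (c ` large_jobs xs T)" by (rule card_Un_le)
  also have "\<dots> \<le> card F + card (large_jobs xs T)"
    using card_image_le[OF finite_large_jobs] by simp
  finally have "real m - real (card (large_jobs xs T)) \<le> real (card F)" by simp
  then have "(real m - real (card (large_jobs xs T))) * min_load m xs c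
               \<le> (\<Sum>j\<in>F. min_load m xs c)"
    using min_load_nonneg[OF \<open>m \<ge> 1\<close> nonneg] by (simp add: mult_right_mono)
  also have "\<dots> \<le> (\<Sum>j\<in>F. small_load xs T c j)"
  proof (rule sum_mono)
    fix j assume j: "j \<in> F"
    then have "{i. i < length xs \<and> c i = j} = {i. i < length xs \<and> c i = j \<and> xs ! i \<le> T}"
      unfolding F_def large_jobs_def by (auto simp: not_less)
    then have "load xs c j = small_load xs T c j" unfolding load_def small_load_def by simp
    moreover have "min_load m xs c \<le> load xs c j"
      using min_load_le_load[of j m xs c] j unfolding F_def by simp
    ultimately show "min_load m xs c \<le> small_load xs T c j" by simp
  qed
  also have "\<dots> \<le> (\<Sum>j<m. small_load xs T c j)"
    by (rule sum_mono2)
      (auto simp: F_def small_load_def intro!: sum_nonneg nth_nonneg[OF nonneg])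
  also have "\<dots> = (\<Sum>i | i < length xs \<and> xs ! i \<le> T. xs ! i)"
    by (rule sum_small_load[OF c])
  finally show ?thesis .
qed

lemma greedy_OPT_le:
  assumes greedy: "greedy_schedule m xs a" and "m \<ge> 1" and nonneg: "\<forall>x \<in> set xs. x \<ge> 0"
    and "T \<ge> 0"
  shows "(real m - real (card (large_jobs xs T))) * OPT m xs \<le> real m * (min_load m xs a + T)"
proof -
  obtain b where b: "b \<in> schedules m xs" "min_load m xs b = OPT m xs"
    using OPT_attained[OF \<open>m \<ge> 1\<close>] .
  have a: "a \<in> schedules m xs" using greedy unfolding greedy_schedule_def by simp
  have "(real m - real (card (large_jobs xs T))) * OPT m xs
          \<le> (\<Sum>i | i < length xs \<and> xs ! i \<le> T. xs ! i)"
    using min_load_times_free_machines_le_small_volume[OF b(1) \<open>m \<ge> 1\<close> nonneg] b(2) by simp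
  also have "\<dots> = (\<Sum>j<m. small_load xs T a j)"
    by (rule sum_small_load[OF a, symmetric])
  also have "\<dots> \<le> (\<Sum>j<m. min_load m xs a + T)"
    by (rule sum_mono) (rule greedy_small_load_le[OF assms])
  finally show ?thesis by simp
qed

lemma powr_three_quarters: "x > 0 \<Longrightarrow> x powr (3/4) = x / root 4 x"
  by (simp add: root_powr_inverse field_simps powr_add[symmetric])

theorem proposition6:
  fixes m :: nat and xs :: "real list" and a :: "nat \<Rightarrow> nat"
  assumes "m \<ge> 1"
    and "\<forall>x \<in> set xs. x \<ge> 0"
    and "simple_input m xs"
    and "greedy_schedule m xs a"
  shows "min_load m xs a \<ge> OPT m xs / (100 * root 4 (real m))"
proof -
  define r where "r = root 4 (real m)"
  define T where "T = OPT m xs / (100 * r)"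
  have "r > 0" "real m > 0" unfolding r_def using assms(1) by auto
  have "T \<ge> 0" unfolding T_def using OPT_nonneg[OF assms(1,2)] \<open>r > 0\<close> by simp
  have k: "num_large m xs = card (large_jobs xs T)"
    unfolding num_large_def large_jobs_def T_def r_def ..
  consider (few_jobs) "length xs < m" | (many_large) "num_large m xs \<ge> m"
    | (few_large) "real (num_large m xs) \<le> real m - real m powr (3/4) / 50"
    using assms(3) unfolding simple_input_def by blast
  then show ?thesis
  proof cases
    case few_jobs
    then show ?thesis using OPT_eq_0_if_fewer_jobs min_load_nonneg assms(1,2) by simp
  next
    case many_large
    then show ?thesis
      using greedy_few_large_jobs_if_min_load_small[OF assms(4,1,2), of T] k
      unfolding T_def r_def by fastforce
  next
    case few_large
    then have "real m / (50 * r) \<le> real m - real (card (large_jobs xs T))"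
      using powr_three_quarters[OF \<open>real m > 0\<close>] k unfolding r_def by simp
    then have "real m / (50 * r) * OPT m xs \<le> real m * (min_load m xs a + T)"
      using greedy_OPT_le[OF assms(4,1,2) \<open>T \<ge> 0\<close>] OPT_nonneg[OF assms(1,2)]
      by (meson mult_right_mono order_trans)
    then have "real m * (OPT m xs / (50 * r)) \<le> real m * (min_load m xs a + T)" by simp
    then have "OPT m xs / (50 * r) \<le> min_load m xs a + T"
      using \<open>real m > 0\<close> by (simp only: mult_le_cancel_left_pos)
    then show ?thesis unfolding T_def r_def by (simp add: field_simps)
  qed
qed

end
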